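(* Let $V$ be a vector space over a field $F$ and let $n\ge 2$. If a widget with $n$ pairs in $V$ contains a legal subwidget, then the widget itself is legal.
   Context: A widget with $n$ pairs in $V$ is an indexed family of $n$ pairs of vectors $p_j=(p_j^+,p_j^-)$, $j=1,\dots,n$, in $V$. A section of a widget is a set of points containing at most one point from each pair. A widget with $n$ pairs is legal if every section spans a linear subspace of $V$ of dimension at most $n-1$. A subwidget of a widget with $n$ pairs is the widget formed by some $k$ of its pairs with $1\le k<n$; it is itself a widget with $k$ pairs, so it is legal if every one of its sections spans a subspace of dimension at most $k-1$. *)

theory Defs
  imports Complex_Main
begin

text \<open>A widget in the vector space given by the scalar multiplication scale
  is an indexed family of pairs p j = (p_j^+, p_j^-), j ranging over a finite
  index set I (the widget has card I pairs).\<close>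

definition widget_pair :: "(nat \<Rightarrow> 'b \<times> 'b) \<Rightarrow> nat \<Rightarrow> 'b set" where
  "widget_pair p j = {fst (p j), snd (p j)}"

definition widget_section :: "nat set \<Rightarrow> (nat \<Rightarrow> 'b \<times> 'b) \<Rightarrow> 'b set \<Rightarrow> bool" where
  "widget_section I p S \<longleftrightarrow>
     S \<subseteq> (\<Union>j\<in>I. widget_pair p j) \<and> (\<forall>j\<in>I. card (S \<inter> widget_pair p j) \<le> 1)"

definition widget_legal ::
  "('a::field \<Rightarrow> 'b::ab_group_add \<Rightarrow> 'b) \<Rightarrow> nat set \<Rightarrow> (nat \<Rightarrow> 'b \<times> 'b) \<Rightarrow> bool" where
  "widget_legal scale I p \<longleftrightarrow>
     (\<forall>S. widget_section I p S \<longrightarrow>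
        vector_space.dim scale (module.span scale S) \<le> card I - 1)"

end

theory Submission
  imports Defs
begin

text \<open>Split a section of a widget with n pairs into its part on a legal subwidget with
  k pairs and its part on the remaining pairs. The first part is a section of the subwidget,
  so it spans at most k - 1 dimensions; the second part has at most one point per remaining
  pair, so it adds at most n - k dimensions.\<close>

lemma (in vector_space) dim_le_dim_plus_card:
  assumes "finite A" "finite T" "S \<subseteq> A \<union> T"
  shows "dim S \<le> dim A + card T"
proof -
  obtain B where B: "B \<subseteq> A" "A \<subseteq> span B" "card B = dim A"
    using basis_exists[of A] by (metis (no_types))
  have "finite B" using B(1) assms(1) finite_subset by blast
  have "S \<subseteq> span (B \<union> T)"
    using assms(3) B(2) span_mono[of B "B \<union> T"] span_superset[of "B \<union> T"] by blast
  then have "dim S \<le> card (B \<union> T)"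
    using \<open>finite B\<close> assms(2) by (intro dim_le_card) auto
  also have "\<dots> \<le> card B + card T" by (rule card_Un_le)
  finally show ?thesis using B(3) by simp
qed

lemma finite_widget_pair: "finite (widget_pair p j)"
  by (simp add: widget_pair_def)

lemma finite_widget_section:
  assumes "finite I" "widget_section I p S"
  shows "finite S"
proof (rule finite_subset)
  show "S \<subseteq> (\<Union>j\<in>I. widget_pair p j)" using assms(2) unfolding widget_section_def ..
qed (simp add: assms(1) finite_widget_pair)

lemma widget_section_restrict:
  assumes "widget_section I p S" "J \<subseteq> I"
  shows "widget_section J p (S \<inter> (\<Union>j\<in>J. widget_pair p j))"
  unfolding widget_section_def
proof (intro conjI ballI)
  fix j assume "j \<in> J"
  have "card (S \<inter> (\<Union>j\<in>J. widget_pair p j) \<inter> widget_pair p j) \<le> card (S \<inter> widget_pair p j)"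
    by (rule card_mono) (auto simp: finite_widget_pair)
  also have "\<dots> \<le> 1" using assms \<open>j \<in> J\<close> unfolding widget_section_def by blast
  finally show "card (S \<inter> (\<Union>j\<in>J. widget_pair p j) \<inter> widget_pair p j) \<le> 1" .
qed blast

lemma card_widget_section_le:
  assumes "finite I" "widget_section I p S"
  shows "card S \<le> card I"
proof -
  have "S = (\<Union>j\<in>I. S \<inter> widget_pair p j)"
    using assms(2) unfolding widget_section_def by blast
  then have "card S = card (\<Union>j\<in>I. S \<inter> widget_pair p j)"
    by (rule arg_cong)
  also have "\<dots> \<le> (\<Sum>j\<in>I. card (S \<inter> widget_pair p j))"
    by (rule card_UN_le[OF assms(1)])
  also have "\<dots> \<le> (\<Sum>j\<in>I. 1)"
    by (rule sum_mono) (use assms(2) in \<open>auto simp: widget_section_def\<close>)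
  finally show ?thesis by simp
qed

lemma widget_legal_if_legal_subwidget:
  assumes "vector_space scale" "finite I" "K \<subseteq> I" "K \<noteq> {}"
    and "widget_legal scale K p"
  shows "widget_legal scale I p"
  unfolding widget_legal_def
proof (intro allI impI)
  interpret vector_space scale by (rule assms(1))
  fix S assume sec: "widget_section I p S"
  define SK where "SK = S \<inter> (\<Union>j\<in>K. widget_pair p j)"
  define ST where "ST = S \<inter> (\<Union>j\<in>I - K. widget_pair p j)"
  have "finite K" "finite (I - K)" using assms(2,3) finite_subset by auto
  have secK: "widget_section K p SK"
    unfolding SK_def using widget_section_restrict[OF sec assms(3)] .
  have secT: "widget_section (I - K) p ST"
    unfolding ST_def using widget_section_restrict[OF sec, of "I - K"] by blast
  have "dim SK \<le> card K - 1"
    using assms(5) secK unfolding widget_legal_def by (metis dim_span)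
  moreover have "card ST \<le> card I - card K"
    using card_widget_section_le[OF \<open>finite (I - K)\<close> secT] assms(2,3)
    by (simp add: card_Diff_subset finite_subset)
  moreover have "card K \<ge> 1" "card K \<le> card I"
    using assms(2-4) \<open>finite K\<close> card_mono by (auto simp: Suc_le_eq card_gt_0_iff)
  moreover have "dim S \<le> dim SK + card ST"
  proof (rule dim_le_dim_plus_card)
    show "finite SK" "finite ST"
      using finite_widget_section \<open>finite K\<close> \<open>finite (I - K)\<close> secK secT by blast+
    show "S \<subseteq> SK \<union> ST"
      using sec unfolding SK_def ST_def widget_section_def by blast
  qed
  ultimately show "dim (span S) \<le> card I - 1" by simp
qed

theorem mainTheorem6:
  fixes scale :: "'a::field \<Rightarrow> 'b::ab_group_add \<Rightarrow> 'b"
    and n :: nat and p :: "nat \<Rightarrow> 'b \<times> 'b" and K :: "nat set"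
  assumes "vector_space scale"
    and "n \<ge> 2"
    and "K \<subseteq> {1..n}" and "1 \<le> card K" and "card K < n"
    and "widget_legal scale K p"
  shows "widget_legal scale {1..n} p"
proof -
  from assms(4) have "K \<noteq> {}" by auto
  then show ?thesis
    by (rule widget_legal_if_legal_subwidget[OF assms(1) finite_atLeastAtMost assms(3) _ assms(6)])
qed

end
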